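(* Let ${\mathcal E}$ be a trigonometric polynomial with support $S$, let $\Lambda\subset{\mathbb Z}^d$ be a polytope and let $E\in{\mathbb C}$. A finitely supported $w\in\ell^2({\mathbb Z}^d)$ satisfies $((E-H_0)w)(x)=0$ for all $x\notin\Lambda$ if and only if $w$ is supported in the $S$-interior $\Lambda^S$ of $\Lambda$.
   Context: ${\mathcal E}:{\mathbb T}^d\to{\mathbb R}$, ${\mathbb T}^d={\mathbb R}^d/(2\pi{\mathbb Z}^d)$, is a Morse function (nondegenerate critical points) with exactly two critical points of definite Hessian (a minimum and a maximum) and all others of indefinite Hessian, and is a trigonometric polynomial ${\mathcal E}(k)=\sum_{s\in S}{\mathcal E}_se^{\imath s\cdot k}$ with ${\mathcal E}_s\neq0$ exactly for $s$ in the finite set $S\subset{\mathbb Z}^d$ (the support of $H_0$; $S=-S$ since ${\mathcal E}$ is real). $H_0=\sum_{s\in S}{\mathcal E}_sT_s$ on $\ell^2({\mathbb Z}^d)$, $(T_s\psi)(x)=\psi(x-s)$. A vector $a\in{\mathbb Z}^d$ is prime if the gcd of its coordinates is $1$. For prime $a$ and $m\in{\mathbb Z}$, $\mathscr H^+_{a,m}=\{x\in{\mathbb Z}^d:a\cdot x\ge m\}$ and $\mathscr H_{a,m}=\{x:a\cdot x=m\}$; $\mathscr H^+_{a,m}$ is a contact half-plane of $\Lambda$ if $\Lambda\subset\mathscr H^+_{a,m}$ and $\Lambda\cap\mathscr H_{a,m}\ne\emptyset$. The convex hull of $\Lambda$ is the intersection of all its contact half-planes; $\Lambda$ is convex if it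 equals its convex hull, and a polytope is a finite nonempty convex set. The $S$-interior of $\Lambda$ is $\Lambda^S=\{x\in\Lambda:x+S\subset\Lambda\}$. *)

theory Defs
  imports "HOL-Analysis.Analysis"
begin

text \<open>Lattice points of Z^d are modelled as int ^ 'd (dimension d = CARD('d)).\<close>

definition zdot :: "int ^ 'd \<Rightarrow> int ^ 'd \<Rightarrow> int" where
  "zdot a x = (\<Sum>i\<in>UNIV. a $ i * x $ i)"

definition prime_vec :: "int ^ 'd \<Rightarrow> bool" where
  "prime_vec a \<longleftrightarrow> Gcd (range (\<lambda>i. a $ i)) = 1"

definition half_plane :: "int ^ 'd \<Rightarrow> int \<Rightarrow> (int ^ 'd) set" where
  "half_plane a m = {x. zdot a x \<ge> m}"

definition hyper_plane :: "int ^ 'd \<Rightarrow> int \<Rightarrow> (int ^ 'd) set" where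
  "hyper_plane a m = {x. zdot a x = m}"

definition contact_half_plane :: "(int ^ 'd) set \<Rightarrow> int ^ 'd \<Rightarrow> int \<Rightarrow> bool" where
  "contact_half_plane \<Lambda> a m \<longleftrightarrow> prime_vec a \<and> \<Lambda> \<subseteq> half_plane a m
     \<and> \<Lambda> \<inter> hyper_plane a m \<noteq> {}"

definition lattice_hull :: "(int ^ 'd) set \<Rightarrow> (int ^ 'd) set" where
  "lattice_hull \<Lambda> = \<Inter> {half_plane a m | a m. contact_half_plane \<Lambda> a m}"

definition lattice_convex :: "(int ^ 'd) set \<Rightarrow> bool" where
  "lattice_convex \<Lambda> \<longleftrightarrow> \<Lambda> = lattice_hull \<Lambda>"

definition lattice_polytope :: "(int ^ 'd) set \<Rightarrow> bool" where
  "lattice_polytope \<Lambda> \<longleftrightarrow> finite \<Lambda> \<and> \<Lambda> \<noteq> {} \<and> lattice_convex \<Lambda>"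

definition S_interior :: "(int ^ 'd) set \<Rightarrow> (int ^ 'd) set \<Rightarrow> (int ^ 'd) set" where
  "S_interior S \<Lambda> = {x \<in> \<Lambda>. (\<lambda>s. x + s) ` S \<subseteq> \<Lambda>}"

definition coeff_support :: "(int ^ 'd \<Rightarrow> complex) \<Rightarrow> (int ^ 'd) set" where
  "coeff_support c = {s. c s \<noteq> 0}"

text \<open>H_0 = sum over s in S of c_s T_s, with (T_s psi)(x) = psi(x - s).\<close>
definition H0 :: "(int ^ 'd \<Rightarrow> complex) \<Rightarrow> (int ^ 'd \<Rightarrow> complex) \<Rightarrow> int ^ 'd \<Rightarrow> complex" where
  "H0 c \<psi> x = (\<Sum>s\<in>coeff_support c. c s * \<psi> (x - s))"

end

theory Submission
  imports Defs
begin

(* Write S for the support of the coefficients c and W for the (finite) support of w.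
   If W lies in the S-interior of \<Lambda>, then for x outside \<Lambda> both w x and every w (x - s),
   s \<in> S, vanish, so (E - H0) w vanishes outside \<Lambda>.

   Conversely, suppose some x0 \<in> W has a point y0 \<in> {x0} \<union> (x0 + S) outside \<Lambda>.  Since \<Lambda>
   is convex, a contact half-plane {zdot a z \<ge> m} of \<Lambda> misses y0.  Perturb the integer
   functional zdot a to a real linear functional f that (i) still separates y0 strictly
   from the finite set \<Lambda>, and (ii) is injective on S, hence attains its minimum on S at a
   unique point ss, with f ss < 0 because S = -S contains a nonzero point.  With xs a
   minimiser of f on W, the point y = xs + ss is "extreme": w y = 0 and
   H0 c w y = c ss * w xs \<noteq> 0, while f y \<le> f y0 forces y \<notin> \<Lambda>.  This contradicts the
   eigenfunction equation at y. *)


definition real_of_lattice :: "int ^ 'd \<Rightarrow> real ^ 'd" where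
  "real_of_lattice z = (\<chi> i. real_of_int (z $ i))"

lemma real_of_lattice_add: "real_of_lattice (x + y) = real_of_lattice x + real_of_lattice y"
  by (simp add: real_of_lattice_def vec_eq_iff)

lemma real_of_lattice_uminus: "real_of_lattice (- z) = - real_of_lattice z"
  by (simp add: real_of_lattice_def vec_eq_iff)

lemma real_of_lattice_eq_iff: "real_of_lattice x = real_of_lattice y \<longleftrightarrow> x = y"
  by (simp add: real_of_lattice_def vec_eq_iff)

lemma zdot_real_of_lattice: "real_of_int (zdot a z) = real_of_lattice a \<bullet> real_of_lattice z"
  by (simp add: real_of_lattice_def zdot_def inner_vec_def)


lemma generic_direction:
  fixes V :: "'a::real_inner set"
  assumes "finite V" "0 \<notin> V" "\<delta> > 0"
  shows "\<exists>b. norm (b - b0) < \<delta> \<and> (\<forall>v\<in>V. b \<bullet> v \<noteq> 0)"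
  using assms
proof (induction V arbitrary: \<delta> rule: finite_induct)
  case empty
  then show ?case by (intro exI[of _ b0]) auto
next
  case (insert v F)
  from insert.prems have v0: "v \<noteq> 0" and F0: "0 \<notin> F" by auto
  obtain b1 where b1: "norm (b1 - b0) < \<delta>/2" "\<forall>u\<in>F. b1 \<bullet> u \<noteq> 0"
    using insert.IH[of "\<delta>/2"] insert.prems F0 by auto
  text \<open>Move b1 along v by a small t avoiding the finitely many bad values.\<close>
  define bad where "bad = (\<lambda>u. - (b1 \<bullet> u) / (v \<bullet> u)) ` insert v F"
  have nv1: "norm v + 1 > 0" using norm_ge_zero[of v] by linarith
  define e where "e = \<delta> / 2 / (norm v + 1)"
  have e0: "e > 0" unfolding e_def using insert.prems nv1 by simp
  have "infinite ({0<..<e} - bad)"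
    using infinite_Ioo[OF e0] insert.hyps unfolding bad_def by (simp add: Diff_infinite_finite)
  then obtain t where t: "0 < t" "t < e" "t \<notin> bad"
    by (metis Diff_iff finite.emptyI ex_in_conv greaterThanLessThan_iff)
  have "norm (t *\<^sub>R v) \<le> e * norm v"
    using t by (simp add: mult_right_mono)
  also have "\<dots> < e * (norm v + 1)" using e0 by simp
  also have "\<dots> = \<delta>/2" unfolding e_def using nv1 by (simp add: divide_simps)
  finally have small: "norm (t *\<^sub>R v) < \<delta>/2" .
  have "(b1 + t *\<^sub>R v) \<bullet> u \<noteq> 0" if u: "u \<in> insert v F" for u
  proof
    assume "(b1 + t *\<^sub>R v) \<bullet> u = 0"
    hence h: "b1 \<bullet> u + t * (v \<bullet> u) = 0" by (simp add: inner_add_left)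
    show False
    proof (cases "v \<bullet> u = 0")
      case True
      then have "u \<in> F" using u v0 by auto
      then show False using b1 h True by auto
    next
      case False
      then have "t = - (b1 \<bullet> u) / (v \<bullet> u)" using h by (simp add: field_simps)
      then show False using t u unfolding bad_def by auto
    qed
  qed
  moreover have "norm (b1 + t *\<^sub>R v - b0) < \<delta>"
    using norm_triangle_ineq[of "b1 - b0" "t *\<^sub>R v"] small b1(1) by (simp add: algebra_simps)
  ultimately show ?case by blast
qed

lemma generic_unique_minimiser:
  fixes S :: "(int ^ 'd) set"
  assumes "finite S" "\<And>s. s \<in> S \<Longrightarrow> - s \<in> S" "s1 \<in> S" "s1 \<noteq> 0" "\<delta> > 0"
  obtains b ss where "norm (b - b0) < \<delta>" "ss \<in> S"
    "b \<bullet> real_of_lattice ss < 0"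
    "\<And>s. s \<in> S \<Longrightarrow> s \<noteq> ss \<Longrightarrow> b \<bullet> real_of_lattice ss < b \<bullet> real_of_lattice s"
proof -
  let ?R = real_of_lattice
  define V where "V = {?R s - ?R s' | s s'. s \<in> S \<and> s' \<in> S \<and> s \<noteq> s'}"
  have "finite V"
    unfolding V_def using finite_image_set2[of "\<lambda>s. s \<in> S" "\<lambda>s'. s' \<in> S"] assms(1)
    by (auto intro: finite_subset[of _ "(\<lambda>(s, s'). ?R s - ?R s') ` (S \<times> S)"])
  moreover have "0 \<notin> V"
    unfolding V_def using real_of_lattice_eq_iff by fastforce
  ultimately obtain b where b: "norm (b - b0) < \<delta>" "\<forall>v\<in>V. b \<bullet> v \<noteq> 0"
    using generic_direction assms(5) by blast
  define f where "f s = b \<bullet> ?R s" for s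
  have f_inj: "f s \<noteq> f s'" if "s \<in> S" "s' \<in> S" "s \<noteq> s'" for s s'
    using b(2) that unfolding f_def V_def by (force simp: inner_diff_right)
  obtain ss where ss: "ss \<in> S" "\<And>s. s \<in> S \<Longrightarrow> f ss \<le> f s"
    using ex_is_arg_min_if_finite[OF assms(1), of f] assms(3)
    by (auto simp: is_arg_min_linorder)
  have f_neg: "f (- s) = - f s" for s
    unfolding f_def by (simp add: real_of_lattice_uminus)
  have "s1 \<noteq> - s1"
  proof
    assume "s1 = - s1"
    then have "s1 $ i = 0" for i by (metis neg_equal_zero vector_uminus_component)
    then show False using assms(4) by (simp add: vec_eq_iff)
  qed
  then have "f s1 \<noteq> f (- s1)" using f_inj assms by blast
  then have "f ss < 0"
    using ss(2)[OF assms(3)] ss(2)[OF assms(2)[OF assms(3)]] f_neg[of s1] by linarith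
  moreover have "f ss < f s" if "s \<in> S" "s \<noteq> ss" for s
    using ss f_inj[OF that(1) ss(1) that(2)] that(1) by force
  ultimately show ?thesis using that b ss(1) unfolding f_def by blast
qed

lemma perturbed_separation:
  fixes a y0 :: "int ^ 'd" and \<Lambda> :: "(int ^ 'd) set"
  assumes "finite \<Lambda>" "\<And>z. z \<in> \<Lambda> \<Longrightarrow> zdot a y0 < zdot a z"
  obtains \<delta> where "\<delta> > 0"
    "\<And>b z. norm (b - real_of_lattice a) < \<delta> \<Longrightarrow> z \<in> \<Lambda> \<Longrightarrow>
       b \<bullet> real_of_lattice y0 < b \<bullet> real_of_lattice z"
proof -
  let ?R = real_of_lattice
  define M where "M = (\<Sum>z\<in>\<Lambda>. norm (?R z - ?R y0))"
  have M0: "M \<ge> 0" unfolding M_def by (simp add: sum_nonneg)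
  have "b \<bullet> ?R y0 < b \<bullet> ?R z"
    if b: "norm (b - ?R a) < 1 / (M + 1)" and z: "z \<in> \<Lambda>" for b z
  proof -
    let ?v = "?R z - ?R y0"
    have "norm ?v \<le> M" unfolding M_def using assms(1) z by (intro member_le_sum) auto
    then have "norm (b - ?R a) * norm ?v \<le> 1 / (M + 1) * M"
      using b M0 by (intro mult_mono) auto
    also have "\<dots> < 1" using M0 by (simp add: divide_less_eq)
    finally have perturbation: "\<bar>(b - ?R a) \<bullet> ?v\<bar> < 1"
      using Cauchy_Schwarz_ineq2[of "b - ?R a" ?v] by linarith
    have "(1::real) \<le> of_int (zdot a z) - of_int (zdot a y0)"
      using assms(2)[OF z] by linarith
    then have "1 \<le> ?R a \<bullet> ?v"
      by (simp add: zdot_real_of_lattice inner_diff_right)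
    with perturbation show ?thesis by (simp add: inner_diff_left inner_diff_right)
  qed
  moreover have "1 / (M + 1) > 0" using M0 by simp
  ultimately show ?thesis using that by blast
qed


lemma H0_at_extreme_point:
  fixes f :: "int ^ 'd \<Rightarrow> real"
  assumes f_add: "\<And>x y. f (x + y) = f x + f y"
    and fin_S: "finite (coeff_support c)" and ss: "ss \<in> coeff_support c"
    and ss_neg: "f ss < 0"
    and ss_unique: "\<And>s. s \<in> coeff_support c \<Longrightarrow> s \<noteq> ss \<Longrightarrow> f ss < f s"
    and xs_min: "\<And>x. w x \<noteq> 0 \<Longrightarrow> f xs \<le> f x"
  shows "w (xs + ss) = 0" and "H0 c w (xs + ss) = c ss * w xs"
proof -
  let ?y = "xs + ss"
  show "w ?y = 0" using xs_min[of ?y] f_add ss_neg by fastforce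
  have "c s * w (?y - s) = (if s = ss then c ss * w xs else 0)"
    if s: "s \<in> coeff_support c" for s
  proof (cases "s = ss")
    case False
    have "f (?y - s) < f xs"
      using f_add[of "?y - s" s] f_add[of xs ss] ss_unique[OF s False] by simp
    then have "w (?y - s) = 0" using xs_min by force
    then show ?thesis using False by simp
  qed simp
  then have "H0 c w ?y = (\<Sum>s\<in>coeff_support c. if s = ss then c ss * w xs else 0)"
    unfolding H0_def by (rule sum.cong[OF refl])
  also have "\<dots> = c ss * w xs" using fin_S ss by simp
  finally show "H0 c w ?y = c ss * w xs" .
qed


lemma eigen_equation_outside_if_support_in_S_interior:
  assumes "{x. w x \<noteq> 0} \<subseteq> S_interior (coeff_support c) \<Lambda>" "x \<notin> \<Lambda>"
  shows "E * w x - H0 c w x = 0"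
proof -
  have "w (x - s) = 0" if "s \<in> coeff_support c" for s
    using assms that unfolding S_interior_def by force
  moreover have "w x = 0" using assms unfolding S_interior_def by auto
  ultimately show ?thesis unfolding H0_def by simp
qed

lemma separating_half_plane:
  assumes "lattice_convex \<Lambda>" "y \<notin> \<Lambda>"
  obtains a m where "\<And>z. z \<in> \<Lambda> \<Longrightarrow> zdot a y < m \<and> m \<le> zdot a z"
proof -
  have "y \<notin> lattice_hull \<Lambda>" using assms unfolding lattice_convex_def by simp
  then obtain a m where "contact_half_plane \<Lambda> a m" "y \<notin> half_plane a m"
    unfolding lattice_hull_def by auto
  then show ?thesis
    using that unfolding contact_half_plane_def half_plane_def by force
qed

text \<open>Support in the S-interior is necessary: otherwise an extreme point of the support,
  shifted by the extreme point of S in a generic direction, violates the equation.\<close>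

lemma support_in_S_interior_if_eigen_equation_outside:
  assumes fin_S: "finite (coeff_support c)"
    and sym_S: "\<And>s. s \<in> coeff_support c \<Longrightarrow> - s \<in> coeff_support c"
    and s1: "s1 \<in> coeff_support c" "s1 \<noteq> 0"
    and fin_\<Lambda>: "finite \<Lambda>" and conv: "lattice_convex \<Lambda>"
    and fin_w: "finite {x. w x \<noteq> 0}"
    and eigen: "\<And>x. x \<notin> \<Lambda> \<Longrightarrow> E * w x - H0 c w x = 0"
  shows "{x. w x \<noteq> 0} \<subseteq> S_interior (coeff_support c) \<Lambda>"
proof (rule ccontr)
  let ?R = real_of_lattice
  assume "\<not> ?thesis"
  then obtain x0 where x0: "w x0 \<noteq> 0" and x0_out: "x0 \<notin> S_interior (coeff_support c) \<Lambda>"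
    by blast
  obtain t where t: "t = 0 \<or> t \<in> coeff_support c" and y0: "x0 + t \<notin> \<Lambda>"
  proof (cases "x0 \<in> \<Lambda>")
    case True
    then obtain s where "s \<in> coeff_support c" "x0 + s \<notin> \<Lambda>"
      using x0_out unfolding S_interior_def by auto
    then show ?thesis using that by blast
  next
    case False
    then show ?thesis using that[of 0] by simp
  qed
  obtain a m where am: "\<And>z. z \<in> \<Lambda> \<Longrightarrow> zdot a (x0 + t) < m \<and> m \<le> zdot a z"
    using separating_half_plane[OF conv y0] by blast
  then have "\<And>z. z \<in> \<Lambda> \<Longrightarrow> zdot a (x0 + t) < zdot a z" by fastforce
  then obtain \<delta> where \<delta>: "\<delta> > 0" "\<And>b z. norm (b - ?R a) < \<delta> \<Longrightarrow> z \<in> \<Lambda> \<Longrightarrow>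
      b \<bullet> ?R (x0 + t) < b \<bullet> ?R z"
    using perturbed_separation[OF fin_\<Lambda>] by blast
  obtain b ss where b: "norm (b - ?R a) < \<delta>" and ss: "ss \<in> coeff_support c"
    "b \<bullet> ?R ss < 0" "\<And>s. s \<in> coeff_support c \<Longrightarrow> s \<noteq> ss \<Longrightarrow> b \<bullet> ?R ss < b \<bullet> ?R s"
    using generic_unique_minimiser[OF fin_S sym_S s1 \<delta>(1)] by blast
  define f where "f z = b \<bullet> ?R z" for z
  have f_add: "f (x + y) = f x + f y" for x y
    unfolding f_def by (simp add: real_of_lattice_add inner_add_right)
  obtain xs where xs: "w xs \<noteq> 0" "\<And>x. w x \<noteq> 0 \<Longrightarrow> f xs \<le> f x"
    using ex_is_arg_min_if_finite[OF fin_w, of f] x0 by (auto simp: is_arg_min_linorder)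
  have ss_f: "f ss < 0" "\<And>s. s \<in> coeff_support c \<Longrightarrow> s \<noteq> ss \<Longrightarrow> f ss < f s"
    using ss unfolding f_def by auto
  note extreme = H0_at_extreme_point[where w = w, OF f_add fin_S ss(1) ss_f xs(2)]
  have "f (xs + ss) \<le> f (x0 + t)"
    using t xs(2)[OF x0] ss f_add[of xs ss] f_add[of x0 t] unfolding f_def by force
  then have "xs + ss \<notin> \<Lambda>" using \<delta>(2)[OF b] unfolding f_def by force
  then have "E * w (xs + ss) - H0 c w (xs + ss) = 0" by (rule eigen)
  moreover have "c ss \<noteq> 0" using ss(1) unfolding coeff_support_def by simp
  ultimately show False using extreme xs(1) by simp
qed


theorem mainTheorem9:
  fixes c :: "int ^ 'd \<Rightarrow> complex"
    and \<Lambda> :: "(int ^ 'd) set"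
    and E :: complex
    and w :: "int ^ 'd \<Rightarrow> complex"
  assumes fin_S: "finite (coeff_support c)"
    and real_E: "\<And>s. c (- s) = cnj (c s)"
    and nonconst: "\<exists>s\<in>coeff_support c. s \<noteq> 0"
    and poly: "lattice_polytope \<Lambda>"
    and fin_w: "finite {x. w x \<noteq> 0}"
  shows "(\<forall>x. x \<notin> \<Lambda> \<longrightarrow> E * w x - H0 c w x = 0)
     \<longleftrightarrow> {x. w x \<noteq> 0} \<subseteq> S_interior (coeff_support c) \<Lambda>"
proof
  text \<open>Since the symbol is real, its support is symmetric: S = -S.\<close>
  have sym_S: "- s \<in> coeff_support c" if "s \<in> coeff_support c" for s
    using that real_E[of s] unfolding coeff_support_def by simp
  have fin_\<Lambda>: "finite \<Lambda>" and conv: "lattice_convex \<Lambda>"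
    using poly unfolding lattice_polytope_def by auto
  obtain s1 where "s1 \<in> coeff_support c" "s1 \<noteq> 0" using nonconst by blast
  then show "\<forall>x. x \<notin> \<Lambda> \<longrightarrow> E * w x - H0 c w x = 0 \<Longrightarrow>
      {x. w x \<noteq> 0} \<subseteq> S_interior (coeff_support c) \<Lambda>"
    using support_in_S_interior_if_eigen_equation_outside[OF fin_S sym_S _ _ fin_\<Lambda> conv fin_w] by blast
next
  show "{x. w x \<noteq> 0} \<subseteq> S_interior (coeff_support c) \<Lambda> \<Longrightarrow>
      \<forall>x. x \<notin> \<Lambda> \<longrightarrow> E * w x - H0 c w x = 0"
    using eigen_equation_outside_if_support_in_S_interior by blast
qed

end
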